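(* Assume $n>3t$, and that every non-faulty process invokes the SBV-Broadcast instance with tag $T$, where the set of input values of the non-faulty processes has at most two elements. Then the SBV-Broadcast algorithm (described in the context) guarantees all of the following. (SBV-Termination) Every invocation by a non-faulty process returns. (SBV-Obligation) The set $\mathit{view}_i$ returned to a non-faulty $p_i$ is non-empty. (SBV-Justification) If $p_i$ is non-faulty and $v\in \mathit{view}_i$, then some non-faulty process invoked the instance with input $v$. (SBV-Inclusion) If $p_i,p_j$ are non-faulty and $\mathit{view}_i=\{v\}$, then $v\in \mathit{view}_j$. (SBV-Uniformity) If all non-faulty processes invoke the instance with the same input $v$, then $\mathit{view}_i=\{v\}$ at every non-faulty $p_i$. (SBV-Singleton) If $p_i,p_j$ are non-faulty, $\mathit{view}_i=\{v\}$ and $\mathit{view}_j=\{w\}$, then $v=w$. (SBV-Binvalues) The (growing) set $\mathit{bin}_i$ returned to a non-faulty $p_i$ satisfies: (a) if $x\in \mathit{bin}_i$ then some non-faulty process invoked the instance with input $x$; (b) if $x$ is ever added to $\mathit{bin}_i$ at a non-faulty $p_i$, then eventually $x\in \mathit{bin}_j$ at every non-faulty $p_j$; (c) eventually $\mathit{bin}_i\neq\emptyset$; (d) if all non-faulty processes input the same $v$, then $v$ is eventually in $\mathit{bin}_i$ of every non-faulty $p_i$; and moreover (e) for all non-faulty $p_i,p_j$, eventually $\mathit{view}_j\subseteq \mathit{bin}_i$.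
   Context: System model: $n$ asynchronous sequential processes $p_1,\dots,p_n$, of which at most $t$ are Byzantine (behave arbitrarily, may collude); the others are non-faulty. Processes communicate over reliable asynchronous point-to-point channels between every pair: messages between non-faulty processes are eventually delivered, unaltered, not duplicated, and the receiver knows the identity of the sender; there is no bound on delays and the adversary controls delivery order. "Broadcast $m$" means sending $m$ to every process (including oneself). When counting messages "received from $k$ distinct processes", at most one message per sender is counted. BV-Broadcast with tag $T$ and input $v$ at process $p_i$: set $\mathit{bin}_i\leftarrow\emptyset$; broadcast $\mathrm{BVAL}(T,v)$; return (a reference to) $\mathit{bin}_i$, which may keep growing afterwards. In the background, for every value $x$: when $\mathrm{BVAL}(T,x)$ has been received from $t+1$ distinct processes and $p_i$ has not yet broadcast $\mathrm{BVAL}(T,x)$, $p_i$ broadcasts $\mathrm{BVAL}(T,x)$; when $\mathrm{BVAL}(T,x)$ has been received from $2t+1$ distinct processes, $p_i$ adds $x$ to $\mathit{bin}_i$. SBV-Broadcast with tag $T$ and input $v$ at $p_i$: $\mathit{bin}_i\leftarrow$ BV-Broadcast with tag $T$ and input $v$; wait until $\mathit{bin}_i\neq\emptyset$; broadcast $\mathrm{AUX}(T,w)$ for some $w\in\mathit{bin}_i$; wait until there are $n-t$ distinct processes $p_j$ from which a message $\mathrm{AUX}(T,w_j)$ has been received with $w_j\in \mathit{bin}_i$ (the current value of the growing set); let $\mathit{view}_i$ be the set of these values $w_j$; return $(\mathit{view}_i,\mathit{bin}_i)$ ($\mathit{view}_i$ is fixed upon return, $\mathit{bin}_i$ may still grow).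 *)

theory Defs
  imports Main
begin

text \<open>Model of one SBV-Broadcast instance (single tag, so the tag is left implicit)
 in an asynchronous message-passing system with Byzantine processes.
 Processes form a finite type 'p, n = CARD('p); F is the set of faulty processes.\<close>

datatype 'v msg = BVAL 'v | AUX 'v

record ('p, 'v) lst =
  started :: bool
  rcvd    :: "('p \<times> 'v msg) set"
  bvsent  :: "'v set"              \<comment> \<open>values x for which BVAL(x) has been broadcast\<close>
  bin     :: "'v set"
  aux     :: "'v option"           \<comment> \<open>value w of the AUX(w) broadcast, if any\<close>
  view    :: "'v set option"

record ('p, 'v) cfg =
  net :: "('p \<times> 'p \<times> 'v msg) set"  \<comment> \<open>messages in transit: (sender, receiver, message)\<close>
  ls  :: "'p \<Rightarrow> ('p, 'v) lst"

definition init_lst :: "('p, 'v) lst" where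
  "init_lst = \<lparr>started = False, rcvd = {}, bvsent = {}, bin = {}, aux = None, view = None\<rparr>"

definition init_cfg :: "('p, 'v) cfg" where
  "init_cfg = \<lparr>net = {}, ls = (\<lambda>_. init_lst)\<rparr>"

definition bcast :: "'p \<Rightarrow> 'v msg \<Rightarrow> ('p \<times> 'p \<times> 'v msg) set" where
  "bcast i m = (\<lambda>k. (i, k, m)) ` UNIV"

definition nbval :: "('p, 'v) lst \<Rightarrow> 'v \<Rightarrow> nat" where
  "nbval s x = card {j. (j, BVAL x) \<in> rcvd s}"

definition start_en :: "('p, 'v) cfg \<Rightarrow> 'p \<Rightarrow> bool" where
  "start_en c i = (\<not> started (ls c i))"

definition echo_en :: "nat \<Rightarrow> ('p, 'v) cfg \<Rightarrow> 'p \<Rightarrow> 'v \<Rightarrow> bool" where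
  "echo_en t c i x = (started (ls c i) \<and> x \<notin> bvsent (ls c i) \<and> t + 1 \<le> nbval (ls c i) x)"

definition bin_en :: "nat \<Rightarrow> ('p, 'v) cfg \<Rightarrow> 'p \<Rightarrow> 'v \<Rightarrow> bool" where
  "bin_en t c i x = (started (ls c i) \<and> x \<notin> bin (ls c i) \<and> 2 * t + 1 \<le> nbval (ls c i) x)"

definition aux_en :: "('p, 'v) cfg \<Rightarrow> 'p \<Rightarrow> bool" where
  "aux_en c i = (started (ls c i) \<and> aux (ls c i) = None \<and> bin (ls c i) \<noteq> {})"

text \<open>S: n - t distinct senders; f j: the (single counted) AUX value from j, which lies in bin_i.\<close>
definition ret_cond :: "nat \<Rightarrow> ('p::finite, 'v) cfg \<Rightarrow> 'p \<Rightarrow> 'p set \<Rightarrow> ('p \<Rightarrow> 'v) \<Rightarrow> bool" where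
  "ret_cond t c i S f = (card S = card (UNIV :: 'p set) - t \<and>
      (\<forall>j\<in>S. (j, AUX (f j)) \<in> rcvd (ls c i) \<and> f j \<in> bin (ls c i)))"

definition ret_en :: "nat \<Rightarrow> ('p::finite, 'v) cfg \<Rightarrow> 'p \<Rightarrow> bool" where
  "ret_en t c i = (started (ls c i) \<and> aux (ls c i) \<noteq> None \<and> view (ls c i) = None \<and>
      (\<exists>S f. ret_cond t c i S f))"

inductive step :: "'p set \<Rightarrow> nat \<Rightarrow> ('p \<Rightarrow> 'v) \<Rightarrow> ('p::finite, 'v) cfg \<Rightarrow> ('p, 'v) cfg \<Rightarrow> bool"
  for F t inp where
  Start: "\<lbrakk> i \<notin> F; start_en c i \<rbrakk> \<Longrightarrow>
     step F t inp c \<lparr>net = net c \<union> bcast i (BVAL (inp i)),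
       ls = (ls c)(i := (ls c i)\<lparr>started := True, bvsent := insert (inp i) (bvsent (ls c i))\<rparr>)\<rparr>"
| Echo: "\<lbrakk> i \<notin> F; echo_en t c i x \<rbrakk> \<Longrightarrow>
     step F t inp c \<lparr>net = net c \<union> bcast i (BVAL x),
       ls = (ls c)(i := (ls c i)\<lparr>bvsent := insert x (bvsent (ls c i))\<rparr>)\<rparr>"
| AddBin: "\<lbrakk> i \<notin> F; bin_en t c i x \<rbrakk> \<Longrightarrow>
     step F t inp c \<lparr>net = net c,
       ls = (ls c)(i := (ls c i)\<lparr>bin := insert x (bin (ls c i))\<rparr>)\<rparr>"
| SendAux: "\<lbrakk> i \<notin> F; aux_en c i; w \<in> bin (ls c i) \<rbrakk> \<Longrightarrow>
     step F t inp c \<lparr>net = net c \<union> bcast i (AUX w),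
       ls = (ls c)(i := (ls c i)\<lparr>aux := Some w\<rparr>)\<rparr>"
| Return: "\<lbrakk> i \<notin> F; ret_en t c i; ret_cond t c i S f \<rbrakk> \<Longrightarrow>
     step F t inp c \<lparr>net = net c,
       ls = (ls c)(i := (ls c i)\<lparr>view := Some (f ` S)\<rparr>)\<rparr>"
| Deliver: "\<lbrakk> i \<notin> F; (j, i, m) \<in> net c \<rbrakk> \<Longrightarrow>
     step F t inp c \<lparr>net = net c - {(j, i, m)},
       ls = (ls c)(i := (ls c i)\<lparr>rcvd := insert (j, m) (rcvd (ls c i))\<rparr>)\<rparr>"
| Inject: "j \<in> F \<Longrightarrow>
     step F t inp c \<lparr>net = insert (j, i, m) (net c), ls = ls c\<rparr>"
| Stutter: "step F t inp c c"

text \<open>Weak fairness: every action of a non-faulty process that stays enabled is eventually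
 taken (equivalently, it is disabled infinitely often), and every message between
 non-faulty processes is eventually delivered.\<close>
definition inf_disabled :: "(nat \<Rightarrow> ('p, 'v) cfg) \<Rightarrow> (('p, 'v) cfg \<Rightarrow> bool) \<Rightarrow> bool" where
  "inf_disabled \<sigma> P = (\<forall>k. \<exists>k'\<ge>k. \<not> P (\<sigma> k'))"

definition fair :: "'p set \<Rightarrow> nat \<Rightarrow> (nat \<Rightarrow> ('p::finite, 'v) cfg) \<Rightarrow> bool" where
  "fair F t \<sigma> = (\<forall>i. i \<notin> F \<longrightarrow>
      inf_disabled \<sigma> (\<lambda>c. start_en c i) \<and>
      (\<forall>x. inf_disabled \<sigma> (\<lambda>c. echo_en t c i x)) \<and>
      (\<forall>x. inf_disabled \<sigma> (\<lambda>c. bin_en t c i x)) \<and>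
      inf_disabled \<sigma> (\<lambda>c. aux_en c i) \<and>
      inf_disabled \<sigma> (\<lambda>c. ret_en t c i) \<and>
      (\<forall>j m. j \<notin> F \<longrightarrow> inf_disabled \<sigma> (\<lambda>c. (j, i, m) \<in> net c)))"

definition execution :: "'p set \<Rightarrow> nat \<Rightarrow> ('p \<Rightarrow> 'v) \<Rightarrow> (nat \<Rightarrow> ('p::finite, 'v) cfg) \<Rightarrow> bool" where
  "execution F t inp \<sigma> = (\<sigma> 0 = init_cfg \<and> (\<forall>k. step F t inp (\<sigma> k) (\<sigma> (Suc k))) \<and> fair F t \<sigma>)"

end

theory Submission imports Defs begin

text \<open>Safety rests on invariants of reachable configurations: a non-faulty process only
  receives from a non-faulty sender what that sender has sent, and each local action leaves a
  permanent trace of its guard (the counters it reads only grow). A value enters some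
  \<open>bin\<^sub>i\<close> only after \<open>2t+1\<close> BVAL messages, so at least \<open>t+1\<close> non-faulty processes
  sent it; these eventually make every non-faulty process echo it and then add it to its own
  \<open>bin\<close>. With at most two input values among at least \<open>2t+1\<close> non-faulty processes one
  value is held by \<open>t+1\<close> of them, so every \<open>bin\<close> becomes non-empty, all AUX messages are sent
  and every process returns. Two sets of \<open>n-t\<close> AUX senders share a non-faulty process when
  \<open>n > 3t\<close>, and that process sent a single AUX value; this gives inclusion and singleton.\<close>

fun sent :: "('p, 'v) cfg \<Rightarrow> 'p \<Rightarrow> 'v msg \<Rightarrow> bool" where
  "sent c j (BVAL x) \<longleftrightarrow> x \<in> bvsent (ls c j)"
| "sent c j (AUX w) \<longleftrightarrow> aux (ls c j) = Some w"

definition progresses :: "('p, 'v) lst \<Rightarrow> ('p, 'v) lst \<Rightarrow> bool" where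
  "progresses s s' \<longleftrightarrow> rcvd s \<subseteq> rcvd s' \<and> bin s \<subseteq> bin s' \<and> bvsent s \<subseteq> bvsent s' \<and>
     (started s \<longrightarrow> started s') \<and> (aux s \<noteq> None \<longrightarrow> aux s' = aux s) \<and>
     (view s \<noteq> None \<longrightarrow> view s' = view s)"

lemma step_progresses: "step F t inp c c' \<Longrightarrow> progresses (ls c p) (ls c' p)"
  by (induction rule: step.induct) (auto simp: progresses_def aux_en_def ret_en_def)

lemma step_sent_mono: "step F t inp c c' \<Longrightarrow> sent c j m \<Longrightarrow> sent c' j m"
  by (cases m) (use step_progresses[of F t inp c c' j] in \<open>auto simp: progresses_def\<close>)

lemma step_sent_new:
  "step F t inp c c' \<Longrightarrow> sent c' j m \<Longrightarrow> sent c j m \<or> (j, i, m) \<in> net c'"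
  by (induction rule: step.induct; cases m) (auto simp: bcast_def split: if_splits)

lemma step_in_transit:
  "step F t inp c c' \<Longrightarrow> (j, i, m) \<in> net c \<Longrightarrow> (j, i, m) \<in> net c' \<or> (j, m) \<in> rcvd (ls c' i)"
  by (induction rule: step.induct) auto

lemma nbval_mono: "rcvd s \<subseteq> rcvd s' \<Longrightarrow> nbval s x \<le> nbval (s' :: ('p::finite, 'v) lst) x"
  unfolding nbval_def by (rule card_mono) auto

lemma ret_cond_mono:
  "ret_cond t c i S f \<Longrightarrow> progresses (ls c i) (ls c' i) \<Longrightarrow> ret_cond t c' i S f"
  unfolding ret_cond_def progresses_def by blast

lemma ex_not_in_if_card_less:
  assumes "finite B" "card B < card A"
  shows "\<exists>x\<in>A. x \<notin> B"
  using card_mono[OF assms(1)] assms(2) by (meson leD subsetI)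

lemma pigeonhole_fibre:
  assumes "finite A" "card (f ` A) * t < card A"
  shows "\<exists>v. t < card {a\<in>A. f a = v}"
proof (rule ccontr)
  assume "\<not> ?thesis"
  then have small: "card {a\<in>A. f a = v} \<le> t" for v
    by (simp add: not_less)
  have "card A \<le> card (\<Union>v\<in>f ` A. {a\<in>A. f a = v})"
    by (rule card_mono) (use assms(1) in auto)
  also have "\<dots> \<le> (\<Sum>v\<in>f ` A. card {a\<in>A. f a = v})"
    by (rule card_UN_le) (use assms(1) in simp)
  also have "\<dots> \<le> card (f ` A) * t"
    using sum_bounded_above[of "f ` A" "\<lambda>v. card {a\<in>A. f a = v}" t] small by simp
  finally show False
    using assms(2) by simp
qed

lemma quorums_intersect:
  fixes S1 S2 :: "'a::finite set"
  assumes "3 * t < card (UNIV :: 'a set)"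
    and "card S1 = card (UNIV :: 'a set) - t" "card S2 = card (UNIV :: 'a set) - t"
  shows "t < card (S1 \<inter> S2)"
proof -
  have "card S1 + card S2 = card (S1 \<union> S2) + card (S1 \<inter> S2)"
    by (rule card_Un_Int) auto
  moreover have "card (S1 \<union> S2) \<le> card (UNIV :: 'a set)"
    by (rule card_mono) auto
  ultimately show ?thesis
    using assms by linarith
qed

lemma inf_disabled_eventually:
  assumes "inf_disabled \<sigma> E"
    and "\<forall>\<^sub>F k in sequentially. E (\<sigma> k) \<or> Q (\<sigma> k)"
    and "\<And>k k'. k \<le> k' \<Longrightarrow> Q (\<sigma> k) \<Longrightarrow> Q (\<sigma> k')"
  shows "\<forall>\<^sub>F k in sequentially. Q (\<sigma> k)"
proof -
  obtain k where "Q (\<sigma> k)"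
    using assms(1,2) unfolding inf_disabled_def eventually_sequentially by blast
  then show ?thesis
    using assms(3) by (intro eventually_sequentiallyI)
qed

lemma ex_of_eventually: "\<forall>\<^sub>F k in sequentially. P k \<Longrightarrow> \<exists>k. P k"
  by (auto simp: eventually_sequentially)

subsection \<open>Invariants\<close>

definition authentic :: "'p set \<Rightarrow> ('p, 'v) cfg \<Rightarrow> bool" where
  "authentic F c \<longleftrightarrow>
     (\<forall>j i m. j \<notin> F \<longrightarrow> (j, i, m) \<in> net c \<longrightarrow> sent c j m) \<and>
     (\<forall>i j m. i \<notin> F \<longrightarrow> j \<notin> F \<longrightarrow> (j, m) \<in> rcvd (ls c i) \<longrightarrow> sent c j m)"

definition bvsent_justified :: "'p set \<Rightarrow> ('p \<Rightarrow> 'v) \<Rightarrow> ('p, 'v) cfg \<Rightarrow> bool" where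
  "bvsent_justified F inp c \<longleftrightarrow> (\<forall>j. j \<notin> F \<longrightarrow> bvsent (ls c j) \<subseteq> inp ` (- F))"

definition sent_tracked :: "'p set \<Rightarrow> ('p, 'v) cfg \<Rightarrow> bool" where
  "sent_tracked F c \<longleftrightarrow>
     (\<forall>i j m. i \<notin> F \<longrightarrow> j \<notin> F \<longrightarrow> sent c j m \<longrightarrow> (j, i, m) \<in> net c \<or> (j, m) \<in> rcvd (ls c i))"

definition guards_recorded :: "nat \<Rightarrow> 'p set \<Rightarrow> ('p \<Rightarrow> 'v) \<Rightarrow> ('p::finite, 'v) cfg \<Rightarrow> bool" where
  "guards_recorded t F inp c \<longleftrightarrow> (\<forall>i. i \<notin> F \<longrightarrow>
     (\<forall>x\<in>bin (ls c i). 2 * t + 1 \<le> nbval (ls c i) x) \<and>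
     (\<forall>w. aux (ls c i) = Some w \<longrightarrow> w \<in> bin (ls c i)) \<and>
     (\<forall>V. view (ls c i) = Some V \<longrightarrow> (\<exists>S f. ret_cond t c i S f \<and> V = f ` S)) \<and>
     (started (ls c i) \<longrightarrow> inp i \<in> bvsent (ls c i)))"

lemma init_invariants:
  "authentic F init_cfg \<and> bvsent_justified F inp init_cfg \<and> sent_tracked F init_cfg
   \<and> guards_recorded t F inp init_cfg"
  unfolding authentic_def bvsent_justified_def sent_tracked_def guards_recorded_def
    init_cfg_def init_lst_def
  by (auto elim: sent.elims)

lemma step_authentic:
  assumes "step F t inp c c'" "authentic F c"
  shows "authentic F c'"
  using assms step_sent_mono[OF assms(1)] unfolding authentic_def
  by cases (auto simp: bcast_def)

lemma step_bvsent_justified: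
  assumes "step F t inp c c'" "card F \<le> t" "authentic F c" "bvsent_justified F inp c"
  shows "bvsent_justified F inp c'"
proof -
  have justified: "bvsent (ls c j) \<subseteq> inp ` (- F)" if "j \<notin> F" for j
    using assms(4) that unfolding bvsent_justified_def by blast
  from assms(1) show ?thesis
  proof cases
    case (Echo i x)
    \<comment> \<open>an echo is triggered by \<open>t+1\<close> senders, hence by a non-faulty one\<close>
    then have "card F < card {j. (j, BVAL x) \<in> rcvd (ls c i)}"
      using assms(2) by (simp add: echo_en_def nbval_def)
    then obtain j where j: "j \<notin> F" "(j, BVAL x) \<in> rcvd (ls c i)"
      using ex_not_in_if_card_less[OF finite] by blast
    then have "sent c j (BVAL x)"
      using assms(3) Echo(2) unfolding authentic_def by blast
    then have "x \<in> inp ` (- F)"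
      using justified[OF j(1)] by auto
    with Echo justified show ?thesis
      unfolding bvsent_justified_def by auto
  qed (use justified in \<open>auto simp: bvsent_justified_def\<close>)
qed

lemma step_sent_tracked:
  assumes "step F t inp c c'" "sent_tracked F c"
  shows "sent_tracked F c'"
  using assms(2) step_sent_new[OF assms(1)] step_in_transit[OF assms(1)]
    step_progresses[OF assms(1)]
  unfolding sent_tracked_def progresses_def by blast

lemma step_guards_recorded:
  assumes "step F t inp c c'" "guards_recorded t F inp c"
  shows "guards_recorded t F inp c'"
proof -
  have pr: "progresses (ls c i) (ls c' i)" for i
    by (rule step_progresses[OF assms(1)])
  have quorum: "2 * t + 1 \<le> nbval (ls c i) x" if "i \<notin> F" "x \<in> bin (ls c i)" for i x
    using assms(2) that unfolding guards_recorded_def by blast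
  have aux_bin: "w \<in> bin (ls c i)" if "i \<notin> F" "aux (ls c i) = Some w" for i w
    using assms(2) that unfolding guards_recorded_def by blast
  have ret: "\<exists>S f. ret_cond t c i S f \<and> V = f ` S" if "i \<notin> F" "view (ls c i) = Some V" for i V
    using assms(2) that unfolding guards_recorded_def by blast
  have input: "inp i \<in> bvsent (ls c i)" if "i \<notin> F" "started (ls c i)" for i
    using assms(2) that unfolding guards_recorded_def by blast
  have "2 * t + 1 \<le> nbval (ls c' i) x" if "i \<notin> F" "x \<in> bin (ls c' i)" for i x
  proof -
    have "2 * t + 1 \<le> nbval (ls c i) x"
      using assms(1) that quorum by cases (auto simp: bin_en_def split: if_splits)
    also have "\<dots> \<le> nbval (ls c' i) x"
      using pr[of i] by (intro nbval_mono) (simp add: progresses_def)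
    finally show ?thesis .
  qed
  moreover have "\<exists>S f. ret_cond t c' i S f \<and> V = f ` S"
    if "i \<notin> F" "view (ls c' i) = Some V" for i V
  proof -
    have "\<exists>S f. ret_cond t c i S f \<and> V = f ` S"
      using assms(1) that ret by cases (auto simp: ret_en_def split: if_splits)
    then show ?thesis
      using ret_cond_mono pr by blast
  qed
  moreover have "w \<in> bin (ls c' i)" if "i \<notin> F" "aux (ls c' i) = Some w" for i w
    using assms(1) that aux_bin by cases (auto simp: aux_en_def split: if_splits)
  moreover have "inp i \<in> bvsent (ls c' i)" if "i \<notin> F" "started (ls c' i)" for i
    using assms(1) that input by cases (auto split: if_splits)
  ultimately show ?thesis
    unfolding guards_recorded_def by blast
qed

locale sbv_execution =
  fixes F :: "'p::finite set" and t :: nat and inp :: "'p \<Rightarrow> 'v" and \<sigma> :: "nat \<Rightarrow> ('p, 'v) cfg"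
  assumes resilience: "3 * t < card (UNIV :: 'p set)"
    and faulty_bound: "card F \<le> t"
    and execution: "execution F t inp \<sigma>"
begin

lemma step_at: "step F t inp (\<sigma> k) (\<sigma> (Suc k))"
  using execution by (simp add: execution_def)

lemma fairness: "fair F t \<sigma>"
  using execution by (simp add: execution_def)

lemma invariants:
  "authentic F (\<sigma> k) \<and> bvsent_justified F inp (\<sigma> k) \<and> sent_tracked F (\<sigma> k)
   \<and> guards_recorded t F inp (\<sigma> k)"
proof (induction k)
  case 0
  show ?case
    using execution init_invariants by (simp add: execution_def)
next
  case (Suc k)
  then show ?case
    using step_at step_authentic step_bvsent_justified[OF _ faulty_bound]
      step_sent_tracked step_guards_recorded by blast
qed

lemma received_sent:
  "i \<notin> F \<Longrightarrow> j \<notin> F \<Longrightarrow> (j, m) \<in> rcvd (ls (\<sigma> k) i) \<Longrightarrow> sent (\<sigma> k) j m"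
  using invariants[of k] unfolding authentic_def by blast

lemma bvsent_in_inputs: "j \<notin> F \<Longrightarrow> x \<in> bvsent (ls (\<sigma> k) j) \<Longrightarrow> x \<in> inp ` (- F)"
  using invariants[of k] unfolding bvsent_justified_def by blast

lemma sent_in_transit_or_received:
  "i \<notin> F \<Longrightarrow> j \<notin> F \<Longrightarrow> sent (\<sigma> k) j m \<Longrightarrow>
   (j, i, m) \<in> net (\<sigma> k) \<or> (j, m) \<in> rcvd (ls (\<sigma> k) i)"
  using invariants[of k] unfolding sent_tracked_def by blast

lemma bin_quorum: "i \<notin> F \<Longrightarrow> x \<in> bin (ls (\<sigma> k) i) \<Longrightarrow> 2 * t + 1 \<le> nbval (ls (\<sigma> k) i) x"
  using invariants[of k] unfolding guards_recorded_def by blast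

lemma aux_in_bin: "i \<notin> F \<Longrightarrow> aux (ls (\<sigma> k) i) = Some w \<Longrightarrow> w \<in> bin (ls (\<sigma> k) i)"
  using invariants[of k] unfolding guards_recorded_def by blast

lemma view_ret_cond:
  "i \<notin> F \<Longrightarrow> view (ls (\<sigma> k) i) = Some V \<Longrightarrow> \<exists>S f. ret_cond t (\<sigma> k) i S f \<and> V = f ` S"
  using invariants[of k] unfolding guards_recorded_def by blast

lemma input_bvsent: "i \<notin> F \<Longrightarrow> started (ls (\<sigma> k) i) \<Longrightarrow> inp i \<in> bvsent (ls (\<sigma> k) i)"
  using invariants[of k] unfolding guards_recorded_def by blast

lemma progresses_le: "k \<le> k' \<Longrightarrow> progresses (ls (\<sigma> k) p) (ls (\<sigma> k') p)"
proof (induction k' rule: dec_induct)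
  case base
  show ?case by (simp add: progresses_def)
next
  case (step k')
  then show ?case
    using step_progresses[OF step_at, of k' p] unfolding progresses_def by auto
qed

lemma rcvd_mono: "k \<le> k' \<Longrightarrow> y \<in> rcvd (ls (\<sigma> k) p) \<Longrightarrow> y \<in> rcvd (ls (\<sigma> k') p)"
  using progresses_le unfolding progresses_def by blast

lemma bin_mono: "k \<le> k' \<Longrightarrow> x \<in> bin (ls (\<sigma> k) p) \<Longrightarrow> x \<in> bin (ls (\<sigma> k') p)"
  using progresses_le unfolding progresses_def by blast

lemma bvsent_mono: "k \<le> k' \<Longrightarrow> x \<in> bvsent (ls (\<sigma> k) p) \<Longrightarrow> x \<in> bvsent (ls (\<sigma> k') p)"
  using progresses_le unfolding progresses_def by blast

lemma started_mono: "k \<le> k' \<Longrightarrow> started (ls (\<sigma> k) p) \<Longrightarrow> started (ls (\<sigma> k') p)"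
  using progresses_le unfolding progresses_def by blast

lemma aux_stable: "k \<le> k' \<Longrightarrow> aux (ls (\<sigma> k) p) = Some w \<Longrightarrow> aux (ls (\<sigma> k') p) = Some w"
  using progresses_le[of k k' p] unfolding progresses_def by auto

lemma aux_unique:
  assumes "aux (ls (\<sigma> k) p) = Some w" "aux (ls (\<sigma> k') p) = Some w'"
  shows "w = w'"
  using aux_stable[OF _ assms(1), of k'] aux_stable[OF _ assms(2), of k] assms by (cases "k \<le> k'") auto

lemma card_nonfaulty: "card (UNIV :: 'p set) - t \<le> card (- F)" "2 * t + 1 \<le> card (- F)"
proof -
  have "card (- F) = card (UNIV :: 'p set) - card F"
    by (simp add: Compl_eq_Diff_UNIV card_Diff_subset)
  then show "card (UNIV :: 'p set) - t \<le> card (- F)" "2 * t + 1 \<le> card (- F)"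
    using resilience faulty_bound by linarith+
qed

subsection \<open>Liveness\<close>

lemma eventually_started:
  assumes "i \<notin> F"
  shows "\<forall>\<^sub>F k in sequentially. started (ls (\<sigma> k) i)"
proof (rule inf_disabled_eventually[where E = "\<lambda>c. start_en c i"])
  show "inf_disabled \<sigma> (\<lambda>c. start_en c i)"
    using fairness assms unfolding fair_def by blast
  show "\<forall>\<^sub>F k in sequentially. start_en (\<sigma> k) i \<or> started (ls (\<sigma> k) i)"
    by (simp add: start_en_def)
qed (rule started_mono)

lemma eventually_received:
  assumes "i \<notin> F" "j \<notin> F" "sent (\<sigma> k) j m"
  shows "\<forall>\<^sub>F k' in sequentially. (j, m) \<in> rcvd (ls (\<sigma> k') i)"
proof (rule inf_disabled_eventually[where E = "\<lambda>c. (j, i, m) \<in> net c"])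
  show "inf_disabled \<sigma> (\<lambda>c. (j, i, m) \<in> net c)"
    using fairness assms(1,2) unfolding fair_def by blast
  have "(j, i, m) \<in> net (\<sigma> (k + d)) \<or> (j, m) \<in> rcvd (ls (\<sigma> (k + d)) i)" for d
  proof (induction d)
    case 0
    show ?case
      using sent_in_transit_or_received assms by simp
  next
    case (Suc d)
    then show ?case
      using step_in_transit[OF step_at[of "k + d"]] rcvd_mono[of "k + d" "Suc (k + d)"] by auto
  qed
  then show "\<forall>\<^sub>F k' in sequentially. (j, i, m) \<in> net (\<sigma> k') \<or> (j, m) \<in> rcvd (ls (\<sigma> k') i)"
    by (intro eventually_sequentiallyI[of k]) (metis le_add_diff_inverse)
qed (rule rcvd_mono)

lemma eventually_received_all:
  assumes "A \<subseteq> - F" "\<forall>j\<in>A. \<forall>\<^sub>F k in sequentially. x \<in> bvsent (ls (\<sigma> k) j)" "i \<notin> F"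
  shows "\<forall>\<^sub>F k in sequentially. A \<subseteq> {j. (j, BVAL x) \<in> rcvd (ls (\<sigma> k) i)}"
proof -
  have "\<forall>\<^sub>F k in sequentially. (j, BVAL x) \<in> rcvd (ls (\<sigma> k) i)" if j: "j \<in> A" for j
  proof -
    obtain k where "x \<in> bvsent (ls (\<sigma> k) j)"
      using ex_of_eventually[OF bspec[OF assms(2) j]] by blast
    moreover have "j \<notin> F"
      using assms(1) j by blast
    ultimately show ?thesis
      using eventually_received[OF assms(3)] by simp
  qed
  then have "\<forall>\<^sub>F k in sequentially. \<forall>j\<in>A. (j, BVAL x) \<in> rcvd (ls (\<sigma> k) i)"
    by (intro eventually_ball_finite) auto
  then show ?thesis
    by (rule eventually_mono) blast
qed

lemma eventually_echoed:
  assumes "A \<subseteq> - F" "t < card A" "\<forall>j\<in>A. \<forall>\<^sub>F k in sequentially. x \<in> bvsent (ls (\<sigma> k) j)"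
    and "i \<notin> F"
  shows "\<forall>\<^sub>F k in sequentially. x \<in> bvsent (ls (\<sigma> k) i)"
proof (rule inf_disabled_eventually[where E = "\<lambda>c. echo_en t c i x"])
  show "inf_disabled \<sigma> (\<lambda>c. echo_en t c i x)"
    using fairness assms(4) unfolding fair_def by blast
  show "\<forall>\<^sub>F k in sequentially. echo_en t (\<sigma> k) i x \<or> x \<in> bvsent (ls (\<sigma> k) i)"
    using eventually_received_all[OF assms(1,3,4)] eventually_started[OF assms(4)]
  proof eventually_elim
    case (elim k)
    then have "card A \<le> nbval (ls (\<sigma> k) i) x"
      unfolding nbval_def by (intro card_mono) auto
    with elim assms(2) show ?case
      unfolding echo_en_def by auto
  qed
qed (rule bvsent_mono)

lemma eventually_bin_if_all_send:
  assumes "\<forall>j\<in>- F. \<forall>\<^sub>F k in sequentially. x \<in> bvsent (ls (\<sigma> k) j)" "i \<notin> F"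
  shows "\<forall>\<^sub>F k in sequentially. x \<in> bin (ls (\<sigma> k) i)"
proof (rule inf_disabled_eventually[where E = "\<lambda>c. bin_en t c i x"])
  show "inf_disabled \<sigma> (\<lambda>c. bin_en t c i x)"
    using fairness assms(2) unfolding fair_def by blast
  show "\<forall>\<^sub>F k in sequentially. bin_en t (\<sigma> k) i x \<or> x \<in> bin (ls (\<sigma> k) i)"
    using eventually_received_all[OF order_refl assms] eventually_started[OF assms(2)]
  proof eventually_elim
    case (elim k)
    then have "card (- F) \<le> nbval (ls (\<sigma> k) i) x"
      unfolding nbval_def by (intro card_mono) auto
    with elim card_nonfaulty(2) show ?case
      unfolding bin_en_def by auto
  qed
qed (rule bin_mono)

lemma eventually_bin_of_quorum:
  assumes "A \<subseteq> - F" "t < card A" "\<forall>j\<in>A. \<forall>\<^sub>F k in sequentially. x \<in> bvsent (ls (\<sigma> k) j)"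
    and "i \<notin> F"
  shows "\<forall>\<^sub>F k in sequentially. x \<in> bin (ls (\<sigma> k) i)"
  using eventually_echoed[OF assms(1-3)] by (intro eventually_bin_if_all_send[OF _ assms(4)]) simp

lemma bin_backed_by_nonfaulty:
  assumes "i \<notin> F" "x \<in> bin (ls (\<sigma> k) i)"
  shows "t < card {p. p \<notin> F \<and> x \<in> bvsent (ls (\<sigma> k) p)}"
proof -
  let ?R = "{p. (p, BVAL x) \<in> rcvd (ls (\<sigma> k) i)}"
  have "2 * t + 1 \<le> card ?R"
    using bin_quorum[OF assms] unfolding nbval_def .
  also have "\<dots> \<le> card (?R - F) + card F"
    using card_Un_le[of "?R - F" F] card_mono[of "(?R - F) \<union> F" ?R] by auto
  also have "card (?R - F) \<le> card {p. p \<notin> F \<and> x \<in> bvsent (ls (\<sigma> k) p)}"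
    using received_sent[OF assms(1)] by (intro card_mono) fastforce+
  finally show ?thesis
    using faulty_bound by linarith
qed

lemma bin_justified:
  assumes "i \<notin> F" "x \<in> bin (ls (\<sigma> k) i)"
  shows "x \<in> inp ` (- F)"
proof -
  have "0 < card {p. p \<notin> F \<and> x \<in> bvsent (ls (\<sigma> k) p)}"
    using bin_backed_by_nonfaulty[OF assms] by linarith
  then obtain p where "p \<notin> F" "x \<in> bvsent (ls (\<sigma> k) p)"
    by (auto simp: card_gt_0_iff)
  then show ?thesis
    by (rule bvsent_in_inputs)
qed

lemma bin_spreads:
  assumes "i \<notin> F" "x \<in> bin (ls (\<sigma> k) i)" "j \<notin> F"
  shows "\<forall>\<^sub>F k' in sequentially. x \<in> bin (ls (\<sigma> k') j)"
proof (rule eventually_bin_of_quorum[OF _ _ _ assms(3)])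
  show "{p. p \<notin> F \<and> x \<in> bvsent (ls (\<sigma> k) p)} \<subseteq> - F"
    by blast
  show "t < card {p. p \<notin> F \<and> x \<in> bvsent (ls (\<sigma> k) p)}"
    by (rule bin_backed_by_nonfaulty[OF assms(1,2)])
  show "\<forall>p\<in>{p. p \<notin> F \<and> x \<in> bvsent (ls (\<sigma> k) p)}.
          \<forall>\<^sub>F k' in sequentially. x \<in> bvsent (ls (\<sigma> k') p)"
    using bvsent_mono by (blast intro: eventually_sequentiallyI)
qed

lemma eventually_input_sent:
  assumes "i \<notin> F"
  shows "\<forall>\<^sub>F k in sequentially. inp i \<in> bvsent (ls (\<sigma> k) i)"
  using eventually_started[OF assms] by (rule eventually_mono) (rule input_bvsent[OF assms])

lemma eventually_bin_unanimous:
  "\<forall>j. j \<notin> F \<longrightarrow> inp j = v \<Longrightarrow> i \<notin> F \<Longrightarrow> \<forall>\<^sub>F k in sequentially. v \<in> bin (ls (\<sigma> k) i)"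
  using eventually_input_sent by (intro eventually_bin_if_all_send) auto

lemma eventually_bin_nonempty:
  assumes "card (inp ` (- F)) \<le> 2" "i \<notin> F"
  shows "\<forall>\<^sub>F k in sequentially. bin (ls (\<sigma> k) i) \<noteq> {}"
proof -
  have "card (inp ` (- F)) * t < card (- F)"
    using assms(1) card_nonfaulty(2) mult_le_mono1[OF assms(1), of t] by linarith
  then obtain v where "t < card {j\<in>- F. inp j = v}"
    using pigeonhole_fibre[OF finite] by blast
  then have "\<forall>\<^sub>F k in sequentially. v \<in> bin (ls (\<sigma> k) i)"
    using eventually_input_sent by (intro eventually_bin_of_quorum[OF _ _ _ assms(2)]) auto
  then show ?thesis
    by (auto elim: eventually_mono)
qed

lemma eventually_aux_sent:
  assumes "card (inp ` (- F)) \<le> 2" "i \<notin> F"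
  shows "\<forall>\<^sub>F k in sequentially. aux (ls (\<sigma> k) i) \<noteq> None"
proof (rule inf_disabled_eventually[where E = "\<lambda>c. aux_en c i"])
  show "inf_disabled \<sigma> (\<lambda>c. aux_en c i)"
    using fairness assms(2) unfolding fair_def by blast
  show "\<forall>\<^sub>F k in sequentially. aux_en (\<sigma> k) i \<or> aux (ls (\<sigma> k) i) \<noteq> None"
    using eventually_bin_nonempty[OF assms] eventually_started[OF assms(2)]
    by eventually_elim (auto simp: aux_en_def)
qed (use aux_stable in blast)

lemma eventually_aux_received:
  assumes "card (inp ` (- F)) \<le> 2" "i \<notin> F" "j \<notin> F"
  shows "\<forall>\<^sub>F k in sequentially. \<exists>w. aux (ls (\<sigma> k) j) = Some w \<and>
           (j, AUX w) \<in> rcvd (ls (\<sigma> k) i) \<and> w \<in> bin (ls (\<sigma> k) i)"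
proof -
  obtain k w where w: "aux (ls (\<sigma> k) j) = Some w"
    using ex_of_eventually[OF eventually_aux_sent[OF assms(1,3)]] by blast
  have "\<forall>\<^sub>F k' in sequentially. aux (ls (\<sigma> k') j) = Some w"
    using aux_stable[OF _ w] by (intro eventually_sequentiallyI)
  moreover have "\<forall>\<^sub>F k' in sequentially. (j, AUX w) \<in> rcvd (ls (\<sigma> k') i)"
    using eventually_received[OF assms(2,3)] w by simp
  moreover have "\<forall>\<^sub>F k' in sequentially. w \<in> bin (ls (\<sigma> k') i)"
    using bin_spreads[OF assms(3) aux_in_bin[OF assms(3) w] assms(2)] .
  ultimately show ?thesis
    by eventually_elim blast
qed

lemma eventually_returns:
  assumes "card (inp ` (- F)) \<le> 2" "i \<notin> F"
  shows "\<forall>\<^sub>F k in sequentially. view (ls (\<sigma> k) i) \<noteq> None"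
proof (rule inf_disabled_eventually[where E = "\<lambda>c. ret_en t c i"])
  show "inf_disabled \<sigma> (\<lambda>c. ret_en t c i)"
    using fairness assms(2) unfolding fair_def by blast
  obtain S where S: "S \<subseteq> - F" "card S = card (UNIV :: 'p set) - t"
    using card_nonfaulty(1) by (meson obtain_subset_with_card_n)
  have "\<forall>\<^sub>F k in sequentially. \<forall>j\<in>- F. \<exists>w. aux (ls (\<sigma> k) j) = Some w \<and>
           (j, AUX w) \<in> rcvd (ls (\<sigma> k) i) \<and> w \<in> bin (ls (\<sigma> k) i)"
    using eventually_aux_received[OF assms] by (intro eventually_ball_finite) auto
  then show "\<forall>\<^sub>F k in sequentially. ret_en t (\<sigma> k) i \<or> view (ls (\<sigma> k) i) \<noteq> None"
    using eventually_started[OF assms(2)]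
  proof eventually_elim
    case (elim k)
    \<comment> \<open>the AUX senders in \<open>S\<close> are non-faulty, so their AUX value is their \<open>aux\<close> field\<close>
    then have "ret_cond t (\<sigma> k) i S (\<lambda>j. the (aux (ls (\<sigma> k) j)))"
      using S unfolding ret_cond_def by force
    with elim assms(2) show ?case
      unfolding ret_en_def by blast
  qed
qed (use progresses_le in \<open>auto simp: progresses_def\<close>)

subsection \<open>Returned views\<close>

lemma view_nonempty_subset_bin:
  assumes "i \<notin> F" "view (ls (\<sigma> k) i) = Some V"
  shows "V \<noteq> {}" "V \<subseteq> bin (ls (\<sigma> k) i)"
proof -
  obtain S f where rc: "ret_cond t (\<sigma> k) i S f" and V: "V = f ` S"
    using view_ret_cond[OF assms] by blast
  have "S \<noteq> {}"
    using rc resilience unfolding ret_cond_def by auto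
  then show "V \<noteq> {}"
    using V by simp
  show "V \<subseteq> bin (ls (\<sigma> k) i)"
    using rc V unfolding ret_cond_def by blast
qed

lemma view_justified:
  assumes "i \<notin> F" "view (ls (\<sigma> k) i) = Some V"
  shows "V \<subseteq> inp ` (- F)"
  using bin_justified[OF assms(1)] view_nonempty_subset_bin(2)[OF assms] by blast

lemma view_unanimous:
  assumes "\<forall>j. j \<notin> F \<longrightarrow> inp j = v" "i \<notin> F" "view (ls (\<sigma> k) i) = Some V"
  shows "V = {v}"
  using view_justified[OF assms(2,3)] view_nonempty_subset_bin(1)[OF assms(2,3)] assms(1) by blast

lemma view_singleton_included:
  assumes "i \<notin> F" "j \<notin> F" "view (ls (\<sigma> k) i) = Some {v}" "view (ls (\<sigma> k') j) = Some V"
  shows "v \<in> V"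
proof -
  obtain S1 f1 where r1: "ret_cond t (\<sigma> k) i S1 f1" and V1: "{v} = f1 ` S1"
    using view_ret_cond[OF assms(1,3)] by blast
  obtain S2 f2 where r2: "ret_cond t (\<sigma> k') j S2 f2" and V2: "V = f2 ` S2"
    using view_ret_cond[OF assms(2,4)] by blast
  have "card F < card (S1 \<inter> S2)"
    using quorums_intersect[OF resilience] r1 r2 faulty_bound
    unfolding ret_cond_def by fastforce
  then obtain p where p: "p \<in> S1" "p \<in> S2" "p \<notin> F"
    using ex_not_in_if_card_less[OF finite] by blast
  have "(p, AUX (f1 p)) \<in> rcvd (ls (\<sigma> k) i)" "(p, AUX (f2 p)) \<in> rcvd (ls (\<sigma> k') j)"
    using r1 r2 p(1,2) unfolding ret_cond_def by blast+
  then have "sent (\<sigma> k) p (AUX (f1 p))" "sent (\<sigma> k') p (AUX (f2 p))"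
    using received_sent[OF assms(1) p(3)] received_sent[OF assms(2) p(3)] by blast+
  then have "aux (ls (\<sigma> k) p) = Some (f1 p)" "aux (ls (\<sigma> k') p) = Some (f2 p)"
    by simp_all
  then have "f1 p = f2 p"
    by (rule aux_unique)
  moreover have "f1 p = v"
    using V1 p(1) by blast
  ultimately show ?thesis
    using V2 p(2) by blast
qed

lemma eventually_view_in_bin:
  assumes "i \<notin> F" "j \<notin> F" "view (ls (\<sigma> k) j) = Some V"
  shows "\<forall>\<^sub>F k' in sequentially. V \<subseteq> bin (ls (\<sigma> k') i)"
proof -
  have "finite V"
    using view_ret_cond[OF assms(2,3)] by (metis finite finite_imageI)
  moreover have "\<forall>x\<in>V. \<forall>\<^sub>F k' in sequentially. x \<in> bin (ls (\<sigma> k') i)"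
    using bin_spreads[OF assms(2) _ assms(1)] view_nonempty_subset_bin(2)[OF assms(2,3)] by blast
  ultimately have "\<forall>\<^sub>F k' in sequentially. \<forall>x\<in>V. x \<in> bin (ls (\<sigma> k') i)"
    by (rule eventually_ball_finite)
  then show ?thesis
    by (rule eventually_mono) blast
qed

end

theorem lemma1:
  fixes F :: "'p::finite set" and t :: nat and inp :: "'p \<Rightarrow> 'v"
    and \<sigma> :: "nat \<Rightarrow> ('p, 'v) cfg"
  assumes "3 * t < card (UNIV :: 'p set)"
    and "card F \<le> t"
    and "card (inp ` (- F)) \<le> 2"
    and "execution F t inp \<sigma>"
  shows
    "(\<forall>i. i \<notin> F \<longrightarrow> (\<exists>k. view (ls (\<sigma> k) i) \<noteq> None))
     \<and> (\<forall>i k V. i \<notin> F \<longrightarrow> view (ls (\<sigma> k) i) = Some V \<longrightarrow> V \<noteq> {})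
     \<and> (\<forall>i k V v. i \<notin> F \<longrightarrow> view (ls (\<sigma> k) i) = Some V \<longrightarrow> v \<in> V \<longrightarrow>
          (\<exists>j. j \<notin> F \<and> inp j = v))
     \<and> (\<forall>i j k k' v V. i \<notin> F \<longrightarrow> j \<notin> F \<longrightarrow> view (ls (\<sigma> k) i) = Some {v} \<longrightarrow>
          view (ls (\<sigma> k') j) = Some V \<longrightarrow> v \<in> V)
     \<and> (\<forall>v. (\<forall>j. j \<notin> F \<longrightarrow> inp j = v) \<longrightarrow>
          (\<forall>i k V. i \<notin> F \<longrightarrow> view (ls (\<sigma> k) i) = Some V \<longrightarrow> V = {v}))
     \<and> (\<forall>i j k k' v w. i \<notin> F \<longrightarrow> j \<notin> F \<longrightarrow> view (ls (\<sigma> k) i) = Some {v} \<longrightarrow>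
          view (ls (\<sigma> k') j) = Some {w} \<longrightarrow> v = w)
     \<and> (\<forall>i k x. i \<notin> F \<longrightarrow> x \<in> bin (ls (\<sigma> k) i) \<longrightarrow> (\<exists>j. j \<notin> F \<and> inp j = x))
     \<and> (\<forall>i j k x. i \<notin> F \<longrightarrow> j \<notin> F \<longrightarrow> x \<in> bin (ls (\<sigma> k) i) \<longrightarrow>
          (\<exists>k'. x \<in> bin (ls (\<sigma> k') j)))
     \<and> (\<forall>i. i \<notin> F \<longrightarrow> (\<exists>k. bin (ls (\<sigma> k) i) \<noteq> {}))
     \<and> (\<forall>v. (\<forall>j. j \<notin> F \<longrightarrow> inp j = v) \<longrightarrow>
          (\<forall>i. i \<notin> F \<longrightarrow> (\<exists>k. v \<in> bin (ls (\<sigma> k) i))))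
     \<and> (\<forall>i j k V. i \<notin> F \<longrightarrow> j \<notin> F \<longrightarrow> view (ls (\<sigma> k) j) = Some V \<longrightarrow>
          (\<exists>k'. V \<subseteq> bin (ls (\<sigma> k') i)))"
proof -
  interpret sbv_execution F t inp \<sigma>
    using assms(1,2,4) by unfold_locales
  show ?thesis
  proof (intro conjI allI impI)
    show "\<exists>k. view (ls (\<sigma> k) i) \<noteq> None" if "i \<notin> F" for i
      using ex_of_eventually[OF eventually_returns[OF assms(3) that]] .
    show "V \<noteq> {}" if "i \<notin> F" "view (ls (\<sigma> k) i) = Some V" for i k V
      using view_nonempty_subset_bin(1)[OF that] .
    show "\<exists>j. j \<notin> F \<and> inp j = v"
      if "i \<notin> F" "view (ls (\<sigma> k) i) = Some V" "v \<in> V" for i k V v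
      using view_justified[OF that(1,2)] that(3) by blast
    show "v \<in> V" if "i \<notin> F" "j \<notin> F" "view (ls (\<sigma> k) i) = Some {v}"
      "view (ls (\<sigma> k') j) = Some V" for i j k k' v V
      using view_singleton_included[OF that] .
    show "v = w" if "i \<notin> F" "j \<notin> F" "view (ls (\<sigma> k) i) = Some {v}"
      "view (ls (\<sigma> k') j) = Some {w}" for i j k k' v w
      using view_singleton_included[OF that] by simp
    show "\<exists>j. j \<notin> F \<and> inp j = x" if "i \<notin> F" "x \<in> bin (ls (\<sigma> k) i)" for i k x
      using bin_justified[OF that] by blast
    show "\<exists>k'. x \<in> bin (ls (\<sigma> k') j)"
      if "i \<notin> F" "j \<notin> F" "x \<in> bin (ls (\<sigma> k) i)" for i j k x
      using ex_of_eventually[OF bin_spreads[OF that(1,3,2)]] .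
    show "\<exists>k. bin (ls (\<sigma> k) i) \<noteq> {}" if "i \<notin> F" for i
      using ex_of_eventually[OF eventually_bin_nonempty[OF assms(3) that]] .
    show "\<exists>k. v \<in> bin (ls (\<sigma> k) i)" if "\<forall>j. j \<notin> F \<longrightarrow> inp j = v" "i \<notin> F" for v i
      using ex_of_eventually[OF eventually_bin_unanimous[OF that]] .
    show "\<exists>k'. V \<subseteq> bin (ls (\<sigma> k') i)"
      if "i \<notin> F" "j \<notin> F" "view (ls (\<sigma> k) j) = Some V" for i j k V
      using ex_of_eventually[OF eventually_view_in_bin[OF that]] .
  qed (fact view_unanimous)
qed

end
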